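(* For any real numbers $a>0$ and $\lambda$ with $0<\lambda<\frac{4a^2}{\pi^2}$, there exist real-valued potentials $V$ such that \[ \limsup_{x\to \infty}|xV(x)|=a \] and the associated Schrödinger operator $H=-D^2+V$ has $\lambda$ as an eigenvalue.
   Context: $D$ denotes differentiation $d/dx$. $H=-D^2+V$ acts on $L^2(0,\infty)$ (with a self-adjoint boundary condition at $0$) or on $L^2(\mathbb{R})$. A number $\lambda$ is an eigenvalue of $H$ if there is a nonzero $u\in L^2$ in the domain of $H$ solving $-u''+Vu=\lambda u$. *)

theory Defs
  imports "HOL-Analysis.Analysis"
begin

text \<open>Eigenvalue of the half-line Schroedinger operator H = -D^2 + V on L^2(0,infinity)
  with the self-adjoint (separated) boundary condition at 0 given by the angle theta:
  cos theta * u(0) - sin theta * u'(0) = 0.  The potential V is real and continuous on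
  [0,infinity), so every solution of -u'' + V u = E u is C^2 on [0,infinity); such a u lies
  in the domain of H iff it is square integrable and satisfies the boundary condition.\<close>

definition half_line_eigenvalue :: "(real \<Rightarrow> real) \<Rightarrow> real \<Rightarrow> real \<Rightarrow> bool" where
  "half_line_eigenvalue V theta E \<longleftrightarrow>
     (\<exists>u u' u''.
        (\<forall>x\<ge>0. (u has_real_derivative u' x) (at x within {0..})) \<and>
        (\<forall>x\<ge>0. (u' has_real_derivative u'' x) (at x within {0..})) \<and>
        (\<forall>x\<ge>0. - u'' x + V x * u x = E * u x) \<and>
        (\<lambda>x. (u x)\<^sup>2) integrable_on {0..} \<and>
        cos theta * u 0 - sin theta * u' 0 = 0 \<and>
        (\<exists>x>0. u x \<noteq> 0))"

end

theory Submission
  imports Defs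
begin

(* The potential is of Wigner-von Neumann type.  An eigenfunction is sought in the
   amplitude-phase form u(x) = G(\<theta>)^(-A) sin \<theta> with \<theta> = k x + 2 \<pi> N.  If G' = h and
   (h sin^2)' = s sin^2, then u solves -u'' + V u = k^2 u for V = k^2 A ((A + 1) h^2 / G^2 - s / G).
   When G grows linearly with slope m and h, s are bounded, u decays like x^(-A), which is square
   integrable for A > 1/2, and x V behaves like -k A s(\<theta>) / m, so limsup |x V| = k A \<sigma> / m
   with \<sigma> = max s.  For the profile s(t) = sin 2t \<psi>(|sin 2t|), where \<psi> cuts 1/w off below the
   level e, one has \<sigma> = 1 - e and m \<ge> 1/\<pi> - e/2.  With e = 1/\<pi> - k/(2a) and
   A = a m / (k (1 - e)) the limsup is a, and A > 1/2 precisely because k < 2a/\<pi>. *)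

lemma bounded_if_periodic:
  fixes g :: "real \<Rightarrow> real"
  assumes p: "0 < p" and cont: "continuous_on {0..p} g"
    and periodic: "\<And>t. 0 \<le> t \<Longrightarrow> g (t + p) = g t"
  shows "\<exists>B. \<forall>t\<ge>0. \<bar>g t\<bar> \<le> B"
proof -
  obtain B where B: "\<And>r. r \<in> {0..p} \<Longrightarrow> \<bar>g r\<bar> \<le> B"
    using continuous_on_compact_bound[OF compact_Icc cont] by auto
  have g_shift: "g (r + real n * p) = g r" if "0 \<le> r" for r n
  proof (induction n)
    case (Suc n)
    have "g (r + real (Suc n) * p) = g ((r + real n * p) + p)" by (simp add: algebra_simps)
    also have "\<dots> = g (r + real n * p)" using that p by (intro periodic) auto
    finally show ?case using Suc by simp
  qed simp
  have "\<bar>g t\<bar> \<le> B" if "0 \<le> t" for t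
  proof -
    define n where "n = nat \<lfloor>t / p\<rfloor>"
    have n: "real n = of_int \<lfloor>t / p\<rfloor>" using that p by (simp add: n_def)
    have "real n * p \<le> t" "t < (real n + 1) * p"
      using n p by (simp_all add: pos_le_divide_eq[symmetric] pos_divide_less_eq[symmetric])
    then have "t - real n * p \<in> {0..p}" by (simp add: algebra_simps)
    moreover have "g t = g (t - real n * p)" using g_shift[of "t - real n * p" n] \<open>real n * p \<le> t\<close>
      by simp
    ultimately show ?thesis using B by simp
  qed
  then show ?thesis by blast
qed

lemma integral_periodic_deviation_bounded:
  fixes f :: "real \<Rightarrow> real"
  assumes p: "0 < p" and cont: "continuous_on UNIV f" and periodic: "\<And>t. f (t + p) = f t"
  shows "\<exists>B. \<forall>t\<ge>0. \<bar>integral {0..t} f - integral {0..p} f / p * t\<bar> \<le> B"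
proof (rule bounded_if_periodic[OF p])
  have int: "f integrable_on {a..b}" for a b
    by (intro integrable_continuous_interval continuous_on_subset[OF cont]) auto
  show "continuous_on {0..p} (\<lambda>t. integral {0..t} f - integral {0..p} f / p * t)"
    by (intro continuous_intros indefinite_integral_continuous_1 int)
  fix t :: real assume "0 \<le> t"
  have "integral {0..t + p} f = integral {0..p} f + integral {p..t + p} f"
    using \<open>0 \<le> t\<close> p by (intro Henstock_Kurzweil_Integration.integral_combine[symmetric] int) auto
  also have "integral {p..t + p} f = integral {0..t} (f \<circ> (+) p)"
    using integral_shift_Icc_real[of 0 t f p] by (simp add: add.commute)
  also have "f \<circ> (+) p = f" using periodic by (auto simp: add.commute)
  finally show "integral {0..t + p} f - integral {0..p} f / p * (t + p)
      = integral {0..t} f - integral {0..p} f / p * t"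
    using p by (simp add: field_simps)
qed

lemma Limsup_eq_by_envelopes:
  fixes f \<alpha> \<beta> :: "'a \<Rightarrow> real"
  assumes \<alpha>: "(\<alpha> \<longlongrightarrow> L) F" and \<beta>: "(\<beta> \<longlongrightarrow> L) F"
    and upper: "\<forall>\<^sub>F x in F. f x \<le> \<alpha> x" and lower: "\<exists>\<^sub>F x in F. \<beta> x \<le> f x"
  shows "Limsup F (\<lambda>x. ereal (f x)) = ereal L"
proof (rule antisym)
  have "F \<noteq> bot"
  proof
    assume "F = bot"
    then show False using lower by (simp add: frequently_def)
  qed
  have "Limsup F (\<lambda>x. ereal (f x)) \<le> Limsup F (\<lambda>x. ereal (\<alpha> x))"
    by (intro Limsup_mono eventually_mono[OF upper]) simp
  also have "\<dots> = ereal L"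
    by (intro lim_imp_Limsup) (simp_all add: \<open>F \<noteq> bot\<close> \<alpha>)
  finally show "Limsup F (\<lambda>x. ereal (f x)) \<le> ereal L" .
  show "ereal L \<le> Limsup F (\<lambda>x. ereal (f x))"
  proof (rule ccontr)
    assume "\<not> ?thesis"
    then obtain y where y: "Limsup F (\<lambda>x. ereal (f x)) < y" "y < ereal L"
      by (meson dense not_le)
    have "\<forall>\<^sub>F x in F. ereal (f x) < y"
      using Limsup_lessD[OF y(1)] .
    moreover have "\<forall>\<^sub>F x in F. y < ereal (\<beta> x)"
      using y(2) by (intro order_tendstoD(1)) (simp_all add: \<beta>)
    ultimately have "\<forall>\<^sub>F x in F. \<not> \<beta> x \<le> f x"
      by eventually_elim (metis ereal_less_eq(3) less_trans not_le)
    then show False using lower by (simp add: frequently_def)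
  qed
qed

lemma powr_shifted_integrable_at_top:
  fixes a :: real assumes "a < -1"
  shows "(\<lambda>x. (x + 1) powr a) integrable_on {0..}"
proof -
  define F where "F y = (y + 1) powr (a + 1) / (a + 1)" for y :: real
  have "((\<lambda>x. (x + 1) powr a) has_integral (0 - F 0)) {0..}"
  proof (rule has_integral_to_inf)
    show "(\<lambda>x. (x + 1) powr a) integrable_on {0..y}" for y
      by (intro integrable_continuous_interval continuous_intros) auto
    have "((\<lambda>x. (x + 1) powr a) has_integral (F y - F 0)) {0..y}" if "0 \<le> y" for y
      unfolding F_def using assms that
      by (intro fundamental_theorem_of_calculus)
        (auto intro!: derivative_eq_intros simp flip: has_real_derivative_iff_has_vector_derivative)
    then have "\<forall>\<^sub>F y in at_top. F y - F 0 = integral {0..y} (\<lambda>x. (x + 1) powr a)"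
      by (intro eventually_at_top_linorderI[of 0]) (metis integral_unique)
    moreover have "((\<lambda>y. F y - F 0) \<longlongrightarrow> 0 / (a + 1) - F 0) at_top"
    proof -
      have "LIM y at_top. (y::real) + 1 :> at_top"
        using filterlim_tendsto_add_at_top[OF tendsto_const filterlim_ident, of 1]
        by (simp add: add.commute)
      then show ?thesis
        unfolding F_def using assms by (intro tendsto_intros tendsto_neg_powr) auto
    qed
    ultimately show "((\<lambda>y. integral {0..y} (\<lambda>x. (x + 1) powr a)) \<longlongrightarrow> 0 - F 0) at_top"
      by (simp add: tendsto_cong)
  qed (use assms in auto)
  then show ?thesis by blast
qed

section \<open>The amplitude-phase construction\<close>

locale wvn_profile =
  fixes G h h' s :: "real \<Rightarrow> real" and m C b \<sigma> :: real
  assumes G_deriv: "\<And>t. 0 < t \<Longrightarrow> (G has_real_derivative h t) (at t)"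
    and h_deriv: "\<And>t. (h has_real_derivative h' t) (at t)"
    and h'_identity: "\<And>t. h' t * sin t + 2 * h t * cos t = s t * sin t"
    and isCont_s: "\<And>t. isCont s t"
    and abs_h_le: "\<And>t. \<bar>h t\<bar> \<le> b"
    and abs_s_le: "\<And>t. \<bar>s t\<bar> \<le> \<sigma>"
    and s_peaks: "\<And>T. \<exists>t\<ge>T. s t = \<sigma>"
    and slope_pos: "0 < m"
    and G_deviation: "\<And>t. 0 \<le> t \<Longrightarrow> \<bar>G t - m * t\<bar> \<le> C"

locale wvn_eigenfunction = wvn_profile +
  fixes k A :: real and N :: nat
  assumes k_pos: "0 < k" and A_pos: "0 < A"
    and offset_large: "C + m * k \<le> m * (2 * pi * real N)"
begin

definition phase :: "real \<Rightarrow> real" where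
  "phase x = k * x + 2 * pi * real N"

definition eigenfn :: "real \<Rightarrow> real" where
  "eigenfn x = G (phase x) powr (- A) * sin (phase x)"

definition eigenfn' :: "real \<Rightarrow> real" where
  "eigenfn' x = k * (G (phase x) powr (- A) *
     (cos (phase x) - A * h (phase x) * sin (phase x) / G (phase x)))"

definition potential :: "real \<Rightarrow> real" where
  "potential x = k\<^sup>2 * A * ((A + 1) * (h (phase x))\<^sup>2 / (G (phase x))\<^sup>2
      - s (phase x) / G (phase x))"

lemma phase_pos: assumes "0 \<le> x" shows "0 < phase x"
proof -
  have "0 \<le> C" using G_deviation[of 0] by simp
  then have "0 < m * (2 * pi * real N)" using offset_large slope_pos k_pos
    by (smt (verit) mult_pos_pos)
  then have "0 < 2 * pi * real N" using slope_pos by (simp add: zero_less_mult_iff)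
  then show ?thesis using assms k_pos by (simp add: phase_def add_nonneg_pos)
qed

lemma G_phase_deviation:
  assumes "0 \<le> x" shows "\<bar>G (phase x) - m * k * x\<bar> \<le> C + m * (2 * pi * real N)"
proof -
  have "\<bar>G (phase x) - m * phase x\<bar> \<le> C" using G_deviation phase_pos[OF assms] by simp
  moreover have "0 \<le> m * (2 * pi * real N)" using slope_pos by simp
  ultimately show ?thesis by (simp add: phase_def algebra_simps)
qed

lemma G_phase_ge: assumes "0 \<le> x" shows "m * k * (x + 1) \<le> G (phase x)"
proof -
  have "m * phase x - C \<le> G (phase x)"
    using G_deviation[of "phase x"] phase_pos[OF assms] by (simp add: abs_le_iff)
  then show ?thesis using offset_large by (simp add: phase_def algebra_simps)
qed

lemma G_phase_pos: assumes "0 \<le> x" shows "0 < G (phase x)"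
  using G_phase_ge[OF assms] slope_pos k_pos assms by (smt (verit) mult_pos_pos)

lemma phase_deriv: "(phase has_real_derivative k) (at x)"
  unfolding phase_def[abs_def] by (auto intro!: derivative_eq_intros)

lemma G_phase_deriv:
  assumes "0 \<le> x" shows "((\<lambda>x. G (phase x)) has_real_derivative h (phase x) * k) (at x)"
  using DERIV_chain2[OF G_deriv[OF phase_pos[OF assms]] phase_deriv] .

lemma h_phase_deriv: "((\<lambda>x. h (phase x)) has_real_derivative h' (phase x) * k) (at x)"
  using DERIV_chain2[OF h_deriv phase_deriv] .

lemma sin_phase_deriv: "((\<lambda>x. sin (phase x)) has_real_derivative cos (phase x) * k) (at x)"
  using DERIV_chain2[OF DERIV_sin phase_deriv] .

lemma cos_phase_deriv: "((\<lambda>x. cos (phase x)) has_real_derivative - sin (phase x) * k) (at x)"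
  using DERIV_chain2[OF DERIV_cos phase_deriv] .

lemma amplitude_deriv:
  assumes "0 \<le> x"
  shows "((\<lambda>x. G (phase x) powr (- A)) has_real_derivative
     G (phase x) powr (- A) * (h (phase x) * k * - A / G (phase x))) (at x)"
  using DERIV_powr[OF G_phase_deriv[OF assms] G_phase_pos[OF assms], of "\<lambda>_. - A" 0] by simp

lemma eigenfn_deriv:
  assumes "0 \<le> x" shows "(eigenfn has_real_derivative eigenfn' x) (at x)"
proof -
  have "G (phase x) \<noteq> 0" using G_phase_pos[OF assms] by simp
  show ?thesis unfolding eigenfn_def[abs_def]
    by (rule DERIV_cong[OF DERIV_mult[OF amplitude_deriv[OF assms] sin_phase_deriv]])
      (use \<open>G (phase x) \<noteq> 0\<close> in \<open>simp add: eigenfn'_def field_simps\<close>)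
qed

lemma eigenfn'_deriv:
  assumes "0 \<le> x" shows "(eigenfn' has_real_derivative (potential x - k\<^sup>2) * eigenfn x) (at x)"
proof -
  have Gx: "G (phase x) \<noteq> 0" using G_phase_pos[OF assms] by simp
  have Ah: "((\<lambda>x. A * h (phase x)) has_real_derivative A * (h' (phase x) * k)) (at x)"
    by (rule DERIV_cmult[OF h_phase_deriv])
  note deriv = DERIV_cmult[OF DERIV_mult[OF amplitude_deriv[OF assms]
    DERIV_diff[OF cos_phase_deriv DERIV_divide[OF DERIV_mult[OF Ah sin_phase_deriv]
      G_phase_deriv[OF assms] Gx]]], of k]
  have h': "h' (phase x) * sin (phase x) = s (phase x) * sin (phase x)
      - 2 * h (phase x) * cos (phase x)"
    using h'_identity[of "phase x"] by simp
  (* h' enters only through h' * sin (phase x); after rewriting it with h'_identity the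
     terms containing cos (phase x) cancel *)
  show ?thesis unfolding eigenfn'_def[abs_def]
    by (rule DERIV_cong[OF deriv])
      (insert Gx h', simp add: potential_def eigenfn_def field_simps power2_eq_square, algebra)
qed

lemma continuous_on_potential: "continuous_on {0..} potential"
proof (intro continuous_at_imp_continuous_on ballI)
  fix x :: real assume "x \<in> {0..}"
  then have x: "0 \<le> x" by simp
  have "isCont (\<lambda>x. h (phase x)) x" "isCont (\<lambda>x. G (phase x)) x"
    using DERIV_isCont h_phase_deriv G_phase_deriv[OF x] by blast+
  moreover have "isCont (\<lambda>x. s (phase x)) x"
    using isCont_o2[OF DERIV_isCont[OF phase_deriv] isCont_s] .
  ultimately show "isCont potential x"
    unfolding potential_def[abs_def] using G_phase_pos[OF x] by (intro continuous_intros) auto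
qed

lemma eigenfn_0: "eigenfn 0 = 0"
  using sin_npi[of "2 * N"] by (simp add: eigenfn_def phase_def mult.commute mult.left_commute)

lemma eigenfn_nonzero: "eigenfn (pi / (2 * k)) \<noteq> 0"
proof -
  have "phase (pi / (2 * k)) = pi / 2 + 2 * real N * pi" using k_pos by (simp add: phase_def)
  then have "sin (phase (pi / (2 * k)))
      = sin (pi / 2) * cos (2 * real N * pi) + cos (pi / 2) * sin (2 * real N * pi)"
    by (simp only: sin_add)
  then have "sin (phase (pi / (2 * k))) = 1" by (simp only: cos_2npi sin_2npi) simp
  moreover have "0 < G (phase (pi / (2 * k)))" using k_pos by (intro G_phase_pos) simp
  ultimately show ?thesis by (simp add: eigenfn_def)
qed

lemma eigenfn_square_le:
  assumes "0 \<le> x" shows "(eigenfn x)\<^sup>2 \<le> (m * k) powr (- 2 * A) * (x + 1) powr (- 2 * A)"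
proof -
  have pos: "0 < m * k * (x + 1)" using slope_pos k_pos assms by simp
  have "(eigenfn x)\<^sup>2 = G (phase x) powr (- 2 * A) * (sin (phase x))\<^sup>2"
    using G_phase_pos[OF assms] by (simp add: eigenfn_def power_mult_distrib powr_powr[symmetric]
      power2_eq_square powr_add[symmetric])
  also have "\<dots> \<le> G (phase x) powr (- 2 * A)"
    by (intro mult_left_le) (auto simp: abs_square_le_1)
  also have "\<dots> \<le> (m * k * (x + 1)) powr (- 2 * A)"
    using G_phase_ge[OF assms] pos A_pos by (intro powr_mono2') auto
  also have "\<dots> = (m * k) powr (- 2 * A) * (x + 1) powr (- 2 * A)"
    using slope_pos k_pos assms by (simp add: powr_mult)
  finally show ?thesis .
qed

lemma eigenfn_square_integrable:
  assumes "1 / 2 < A" shows "(\<lambda>x. (eigenfn x)\<^sup>2) integrable_on {0..}"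
proof (rule measurable_bounded_by_integrable_imp_integrable_real)
  have "continuous_on {0..} eigenfn"
    by (intro continuous_at_imp_continuous_on ballI DERIV_isCont[OF eigenfn_deriv]) auto
  then show "(\<lambda>x. (eigenfn x)\<^sup>2) \<in> borel_measurable (lebesgue_on {0..})"
    by (intro continuous_imp_measurable_on_sets_lebesgue continuous_intros) auto
  show "(\<lambda>x. (m * k) powr (- 2 * A) * (x + 1) powr (- 2 * A)) integrable_on {0..}"
    using assms by (intro integrable_on_mult_right powr_shifted_integrable_at_top) auto
  show "\<bar>(eigenfn x)\<^sup>2\<bar> \<le> (m * k) powr (- 2 * A) * (x + 1) powr (- 2 * A)" if "x \<in> {0..}" for x
    using eigenfn_square_le that by simp
qed auto

lemma half_line_eigenvalue_potential:
  assumes "1 / 2 < A" shows "half_line_eigenvalue potential 0 (k\<^sup>2)"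
  unfolding half_line_eigenvalue_def
proof (rule exI[of _ eigenfn], rule exI[of _ eigenfn'],
    rule exI[of _ "\<lambda>x. (potential x - k\<^sup>2) * eigenfn x"], intro conjI allI impI)
  show "(eigenfn has_real_derivative eigenfn' x) (at x within {0..})" if "0 \<le> x" for x
    using eigenfn_deriv[OF that] by (rule has_field_derivative_at_within)
  show "(eigenfn' has_real_derivative (potential x - k\<^sup>2) * eigenfn x) (at x within {0..})"
    if "0 \<le> x" for x
    using eigenfn'_deriv[OF that] by (rule has_field_derivative_at_within)
  show "- ((potential x - k\<^sup>2) * eigenfn x) + potential x * eigenfn x = k\<^sup>2 * eigenfn x" for x
    by (simp add: algebra_simps)
  show "(\<lambda>x. (eigenfn x)\<^sup>2) integrable_on {0..}" by (rule eigenfn_square_integrable[OF assms])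
  show "cos 0 * eigenfn 0 - sin 0 * eigenfn' 0 = 0" by (simp add: eigenfn_0)
  show "\<exists>x>0. eigenfn x \<noteq> 0" using eigenfn_nonzero k_pos by (intro exI[of _ "pi / (2 * k)"]) auto
qed

lemma G_phase_over_x_tendsto: "((\<lambda>x. G (phase x) / x) \<longlongrightarrow> m * k) at_top"
proof -
  define D where "D = C + m * (2 * pi * real N)"
  have "((\<lambda>x. D * inverse x) \<longlongrightarrow> 0) at_top"
    using tendsto_mult[OF tendsto_const[of D] tendsto_inverse_0_at_top[OF filterlim_ident]] by simp
  moreover have "\<forall>\<^sub>F x in at_top. norm ((G (phase x) - m * k * x) / x) \<le> D * inverse x"
    using eventually_gt_at_top[of 0]
  proof eventually_elim
    case (elim x)
    then have "norm ((G (phase x) - m * k * x) / x) = \<bar>G (phase x) - m * k * x\<bar> / x" by simp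
    also have "\<dots> \<le> D / x" using G_phase_deviation[of x] elim
      by (intro divide_right_mono) (simp_all add: D_def)
    finally show ?case by (simp add: divide_inverse)
  qed
  ultimately have "((\<lambda>x. (G (phase x) - m * k * x) / x) \<longlongrightarrow> 0) at_top"
    by (rule Lim_null_comparison[rotated])
  then have "((\<lambda>x. (G (phase x) - m * k * x) / x + m * k) \<longlongrightarrow> 0 + m * k) at_top"
    by (rule tendsto_add[OF _ tendsto_const])
  moreover have "\<forall>\<^sub>F x in at_top. (G (phase x) - m * k * x) / x + m * k = G (phase x) / x"
    using eventually_gt_at_top[of 0] by eventually_elim (simp add: field_simps)
  ultimately show ?thesis by (simp add: tendsto_cong)
qed

lemma x_over_G_phase_tendsto: "((\<lambda>x. x / G (phase x)) \<longlongrightarrow> 1 / (m * k)) at_top"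
  using tendsto_inverse[OF G_phase_over_x_tendsto] slope_pos k_pos by (simp add: inverse_eq_divide)

lemma x_over_G_phase_sq_tendsto: "((\<lambda>x. x / (G (phase x))\<^sup>2) \<longlongrightarrow> 0) at_top"
proof -
  have "((\<lambda>x. (x / G (phase x)) * (x / G (phase x)) * inverse x)
      \<longlongrightarrow> 1 / (m * k) * (1 / (m * k)) * 0) at_top"
    by (rule tendsto_mult[OF tendsto_mult[OF x_over_G_phase_tendsto x_over_G_phase_tendsto]
        tendsto_inverse_0_at_top[OF filterlim_ident]])
  moreover have "\<forall>\<^sub>F x in at_top. (x / G (phase x)) * (x / G (phase x)) * inverse x
      = x / (G (phase x))\<^sup>2"
    using eventually_gt_at_top[of 0] by eventually_elim (simp add: field_simps power2_eq_square)
  ultimately show ?thesis by (simp add: tendsto_cong)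
qed

lemma frequently_peak_phase: "\<exists>\<^sub>F x in at_top. 0 \<le> x \<and> s (phase x) = \<sigma>"
  unfolding frequently_def eventually_at_top_linorder
proof
  assume "\<exists>X. \<forall>x\<ge>X. \<not> (0 \<le> x \<and> s (phase x) = \<sigma>)"
  then obtain X where X: "\<And>x. X \<le> x \<Longrightarrow> \<not> (0 \<le> x \<and> s (phase x) = \<sigma>)" by blast
  obtain t where t: "phase (max X 0) \<le> t" "s t = \<sigma>" using s_peaks by blast
  define x where "x = (t - 2 * pi * real N) / k"
  have "phase x = t" using k_pos by (simp add: x_def phase_def)
  moreover have "k * max X 0 \<le> t - 2 * pi * real N" using t(1) by (simp add: phase_def)
  then have "max X 0 \<le> x" unfolding x_def pos_le_divide_eq[OF k_pos] by (metis mult.commute)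
  ultimately show False using X t(2) by auto
qed

lemma x_potential_eq:
  assumes "0 \<le> x"
  shows "x * potential x = k\<^sup>2 * A * (A + 1) * (h (phase x))\<^sup>2 * (x / (G (phase x))\<^sup>2)
    - k\<^sup>2 * A * s (phase x) * (x / G (phase x))"
  using G_phase_pos[OF assms] by (simp add: potential_def field_simps power2_eq_square)

lemma decaying_term_bounds:
  assumes "0 \<le> x"
  shows "0 \<le> k\<^sup>2 * A * (A + 1) * (h (phase x))\<^sup>2 * (x / (G (phase x))\<^sup>2)"
    and "k\<^sup>2 * A * (A + 1) * (h (phase x))\<^sup>2 * (x / (G (phase x))\<^sup>2)
      \<le> k\<^sup>2 * A * (A + 1) * b\<^sup>2 * (x / (G (phase x))\<^sup>2)"
proof -
  have "0 \<le> x / (G (phase x))\<^sup>2" using assms by simp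
  moreover have "(h (phase x))\<^sup>2 \<le> b\<^sup>2"
    using power_mono[OF abs_h_le[of "phase x"] abs_ge_zero, of 2] by simp
  ultimately show "0 \<le> k\<^sup>2 * A * (A + 1) * (h (phase x))\<^sup>2 * (x / (G (phase x))\<^sup>2)"
    and "k\<^sup>2 * A * (A + 1) * (h (phase x))\<^sup>2 * (x / (G (phase x))\<^sup>2)
      \<le> k\<^sup>2 * A * (A + 1) * b\<^sup>2 * (x / (G (phase x))\<^sup>2)"
    using A_pos by (intro mult_nonneg_nonneg mult_right_mono mult_left_mono; simp)+
qed

lemma oscillating_term_abs_le:
  assumes "0 \<le> x"
  shows "\<bar>k\<^sup>2 * A * s (phase x) * (x / G (phase x))\<bar> \<le> k\<^sup>2 * A * \<sigma> * (x / G (phase x))"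
proof -
  have "0 \<le> x / G (phase x)" using assms G_phase_pos[OF assms] by simp
  then have "k\<^sup>2 * A * \<bar>s (phase x)\<bar> * (x / G (phase x)) \<le> k\<^sup>2 * A * \<sigma> * (x / G (phase x))"
    using A_pos abs_s_le by (intro mult_right_mono mult_left_mono) auto
  then show ?thesis using A_pos assms G_phase_pos[OF assms] by (simp add: abs_mult)
qed

lemma Limsup_x_potential:
  "Limsup at_top (\<lambda>x. ereal \<bar>x * potential x\<bar>) = ereal (k * A * \<sigma> / m)"
proof -
  define c where "c = k\<^sup>2 * A * (A + 1) * b\<^sup>2"
  define \<alpha> where "\<alpha> x = c * (x / (G (phase x))\<^sup>2) + k\<^sup>2 * A * \<sigma> * (x / G (phase x))" for x
  define \<beta> where "\<beta> x = k\<^sup>2 * A * \<sigma> * (x / G (phase x)) - c * (x / (G (phase x))\<^sup>2)" for x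
  have "k\<^sup>2 * A * \<sigma> * (1 / (m * k)) = k * A * \<sigma> / m"
    using slope_pos k_pos by (simp add: field_simps power2_eq_square)
  then have main: "((\<lambda>x. k\<^sup>2 * A * \<sigma> * (x / G (phase x))) \<longlongrightarrow> k * A * \<sigma> / m) at_top"
    using tendsto_mult_left[OF x_over_G_phase_tendsto, of "k\<^sup>2 * A * \<sigma>"] by simp
  have error: "((\<lambda>x. c * (x / (G (phase x))\<^sup>2)) \<longlongrightarrow> 0) at_top"
    using tendsto_mult_left[OF x_over_G_phase_sq_tendsto, of c] by simp
  have "(\<alpha> \<longlongrightarrow> k * A * \<sigma> / m) at_top" "(\<beta> \<longlongrightarrow> k * A * \<sigma> / m) at_top"
    unfolding \<alpha>_def[abs_def] \<beta>_def[abs_def]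
    using tendsto_add[OF error main] tendsto_diff[OF main error] by simp_all
  moreover have "\<forall>\<^sub>F x in at_top. \<bar>x * potential x\<bar> \<le> \<alpha> x"
    using eventually_ge_at_top[of 0]
  proof eventually_elim
    case (elim x)
    show ?case unfolding x_potential_eq[OF elim] \<alpha>_def c_def
      using decaying_term_bounds[OF elim] oscillating_term_abs_le[OF elim]
      by (intro order_trans[OF abs_triangle_ineq4 add_mono]) simp_all
  qed
  moreover have "\<exists>\<^sub>F x in at_top. \<beta> x \<le> \<bar>x * potential x\<bar>"
    using frequently_peak_phase
  proof (rule frequently_elim1)
    fix x assume x: "0 \<le> x \<and> s (phase x) = \<sigma>"
    then have "\<beta> x \<le> - (x * potential x)"
      using decaying_term_bounds(2)[of x]
      unfolding x_potential_eq[OF conjunct1[OF x]] \<beta>_def c_def by simp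
    then show "\<beta> x \<le> \<bar>x * potential x\<bar>" by linarith
  qed
  ultimately show ?thesis by (rule Limsup_eq_by_envelopes)
qed

end

lemma (in wvn_profile) exists_potential:
  assumes "0 < k" "1 / 2 < A"
  shows "\<exists>V. continuous_on {0..} V \<and> Limsup at_top (\<lambda>x. ereal \<bar>x * V x\<bar>) = ereal (k * A * \<sigma> / m)
    \<and> half_line_eigenvalue V 0 (k\<^sup>2)"
proof -
  obtain N :: nat where "(C + m * k) / (m * (2 * pi)) \<le> real N" using real_arch_simple by blast
  then have "C + m * k \<le> m * (2 * pi * real N)"
    using slope_pos by (simp add: pos_divide_le_eq mult_ac)
  then interpret wvn_eigenfunction G h h' s m C b \<sigma> k A N
    using assms wvn_profile_axioms by unfold_locales auto
  show ?thesis
    using continuous_on_potential Limsup_x_potential half_line_eigenvalue_potential[OF assms(2)]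
      by blast
qed

section \<open>A concrete profile\<close>

definition cutoff_inv :: "real \<Rightarrow> real \<Rightarrow> real" where
  "cutoff_inv e w = max 0 (w - e) / (max e w)\<^sup>2"

definition wave :: "real \<Rightarrow> real \<Rightarrow> real" where
  "wave e t = sin (2 * t) * cutoff_inv e \<bar>sin (2 * t)\<bar>"

definition rectified_sin :: "real \<Rightarrow> real \<Rightarrow> real" where
  "rectified_sin e t = max 0 (\<bar>sin (2 * t)\<bar> - e)"

lemma cutoff_inv_nonneg: "0 < e \<Longrightarrow> 0 \<le> cutoff_inv e w"
  unfolding cutoff_inv_def by auto

lemma cutoff_inv_eq_0: "w \<le> e \<Longrightarrow> cutoff_inv e w = 0"
  by (simp add: cutoff_inv_def)

lemma cutoff_inv_le: assumes "0 < e" shows "cutoff_inv e w \<le> 1 / e"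
proof (cases "w \<le> e")
  case False
  then have "cutoff_inv e w = (w - e) / w\<^sup>2" by (simp add: cutoff_inv_def)
  also have "\<dots> \<le> w / w\<^sup>2" using False assms by (intro divide_right_mono) auto
  also have "\<dots> = 1 / w" by (simp add: power2_eq_square)
  also have "\<dots> \<le> 1 / e" using False assms by (intro divide_left_mono) auto
  finally show ?thesis .
qed (use assms in \<open>simp add: cutoff_inv_eq_0\<close>)

lemma sq_mult_cutoff_inv:
  assumes "0 < e" "0 \<le> w" shows "w\<^sup>2 * cutoff_inv e w = max 0 (w - e)"
  using assms by (cases "w \<le> e") (auto simp: cutoff_inv_def max_def)

lemma continuous_on_cutoff_inv: "0 < e \<Longrightarrow> continuous_on UNIV (cutoff_inv e)"
  unfolding cutoff_inv_def by (intro continuous_intros) (auto simp: max_def)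

lemma isCont_wave: assumes "0 < e" shows "isCont (wave e) t"
proof -
  have "isCont (cutoff_inv e) w" for w
    using continuous_on_cutoff_inv[OF assms] by (simp add: continuous_on_eq_continuous_at)
  moreover have "isCont (\<lambda>t. \<bar>sin (2 * t)\<bar>) t" by (intro continuous_intros)
  ultimately have "isCont (\<lambda>t. cutoff_inv e \<bar>sin (2 * t)\<bar>) t"
    using isCont_o2 by blast
  then show ?thesis unfolding wave_def[abs_def] by (intro continuous_intros)
qed

lemma wave_mult_sin: "0 < e \<Longrightarrow> wave e t * sin (2 * t) = rectified_sin e t"
  using sq_mult_cutoff_inv[of e "\<bar>sin (2 * t)\<bar>"]
  by (simp add: wave_def rectified_sin_def power2_eq_square algebra_simps)

lemma abs_wave_le: assumes "0 < e" "e < 1" shows "\<bar>wave e t\<bar> \<le> 1 - e"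
proof (cases "\<bar>sin (2 * t)\<bar> \<le> e")
  case False
  define w where "w = \<bar>sin (2 * t)\<bar>"
  have w: "e < w" "w \<le> 1" using False by (auto simp: w_def)
  have "\<bar>wave e t\<bar> = w * cutoff_inv e w"
    using cutoff_inv_nonneg[OF assms(1)] by (simp add: wave_def w_def abs_mult)
  also have "\<dots> = 1 - e / w" using w assms by (simp add: cutoff_inv_def power2_eq_square field_simps)
  also have "\<dots> \<le> 1 - e" using w assms by (simp add: field_simps)
  finally show ?thesis .
qed (use assms in \<open>simp add: wave_def cutoff_inv_eq_0\<close>)

lemma wave_peak: assumes "0 < e" "e < 1" shows "wave e (pi / 4 + real n * pi) = 1 - e"
proof -
  have "2 * (pi / 4 + real n * pi) = pi / 2 + 2 * real n * pi" by (simp add: algebra_simps)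
  moreover have "cos (2 * (real n * pi)) = 1" using cos_2npi[of n] by (simp add: mult.assoc)
  ultimately have "sin (2 * (pi / 4 + real n * pi)) = 1" by (simp add: sin_add)
  then show ?thesis using assms by (simp add: wave_def cutoff_inv_def)
qed

lemma wave_peaks_unbounded:
  assumes "0 < e" "e < 1" shows "\<exists>t\<ge>T. wave e t = 1 - e"
proof -
  obtain n :: nat where "T \<le> real n" using real_arch_simple by blast
  moreover have "real n * 1 \<le> real n * pi" using pi_gt3 by (intro mult_left_mono) auto
  ultimately have "T \<le> pi / 4 + real n * pi" using pi_gt_zero by linarith
  then show ?thesis using wave_peak[OF assms] by blast
qed

definition envelope_density :: "real \<Rightarrow> real \<Rightarrow> real" where
  "envelope_density e x = (1 - x) * cutoff_inv e (sqrt (1 - x\<^sup>2))"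

(* This is a quarter of the integral of envelope_density e over {c..1} for c \<ge> -2; the
   difference form makes it differentiable also at c = 1 and c = -1. *)
definition envelope_tail :: "real \<Rightarrow> real \<Rightarrow> real" where
  "envelope_tail e c =
     (integral {-2..1} (envelope_density e) - integral {-2..c} (envelope_density e)) / 4"

(* envelope e t * sin^2 t depends only on cos (2 t), and its derivative is wave e t * sin^2 t.
   At the zeros of sin the division by 0 gives 0, which agrees with the values nearby. *)
definition envelope :: "real \<Rightarrow> real \<Rightarrow> real" where
  "envelope e t = envelope_tail e (cos (2 * t)) / (sin t)\<^sup>2"

definition envelope_deriv :: "real \<Rightarrow> real \<Rightarrow> real" where
  "envelope_deriv e t = wave e t - 2 * envelope e t * cos t / sin t"

lemma continuous_on_envelope_density: "0 < e \<Longrightarrow> continuous_on UNIV (envelope_density e)"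
  unfolding envelope_density_def
  by (intro continuous_intros continuous_on_compose2[OF continuous_on_cutoff_inv]) auto

lemma envelope_density_integrable: "0 < e \<Longrightarrow> envelope_density e integrable_on {a..b}"
  by (intro integrable_continuous_interval continuous_on_subset[OF continuous_on_envelope_density])
    auto

lemma envelope_density_nonneg: "0 < e \<Longrightarrow> x \<le> 1 \<Longrightarrow> 0 \<le> envelope_density e x"
  unfolding envelope_density_def using cutoff_inv_nonneg by auto

lemma envelope_density_le:
  assumes "0 < e" "-1 \<le> x" "x \<le> 1" shows "envelope_density e x \<le> 2 / e"
proof -
  have "envelope_density e x \<le> 2 * (1 / e)" unfolding envelope_density_def
    using assms cutoff_inv_le[OF assms(1)] cutoff_inv_nonneg[OF assms(1)] by (intro mult_mono) auto
  then show ?thesis by simp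
qed

lemma envelope_density_eq_0:
  assumes "0 < e" "e < 1" "sqrt (1 - e\<^sup>2) \<le> x" shows "envelope_density e x = 0"
proof -
  have "0 \<le> x" using assms(3) real_sqrt_ge_zero[of "1 - e\<^sup>2"] assms(1,2)
    by (smt (verit) power_le_one)
  then have "1 - e\<^sup>2 \<le> x\<^sup>2" using assms(3) by (metis abs_of_nonneg real_sqrt_abs real_sqrt_le_iff)
  then have "sqrt (1 - x\<^sup>2) \<le> e" using assms(1) real_sqrt_le_iff[of "1 - x\<^sup>2" "e\<^sup>2"] by simp
  then show ?thesis by (simp add: envelope_density_def cutoff_inv_eq_0)
qed

lemma envelope_density_cos:
  "envelope_density e (cos (2 * t)) = 2 * (sin t)\<^sup>2 * cutoff_inv e \<bar>sin (2 * t)\<bar>"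
proof -
  have "1 - (cos (2 * t))\<^sup>2 = (sin (2 * t))\<^sup>2" by (simp add: sin_squared_eq)
  moreover have "1 - cos (2 * t) = 2 * (sin t)\<^sup>2" by (simp add: cos_double_sin)
  ultimately show ?thesis by (simp add: envelope_density_def)
qed

lemma envelope_tail_eq:
  assumes "0 < e" "-2 \<le> c" "c \<le> 1"
  shows "envelope_tail e c = integral {c..1} (envelope_density e) / 4"
  using Henstock_Kurzweil_Integration.integral_combine[OF assms(2,3)
      envelope_density_integrable[OF assms(1)]]
  by (simp add: envelope_tail_def)

lemma envelope_tail_deriv:
  assumes "0 < e" "-2 < c" "c < 2"
  shows "(envelope_tail e has_real_derivative - envelope_density e c / 4) (at c)"
proof -
  have "((\<lambda>x. integral {-2..x} (envelope_density e)) has_real_derivative envelope_density e c)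
      (at c within {-2..2})"
    using assms
    by (intro integral_has_real_derivative continuous_on_subset[OF continuous_on_envelope_density]) auto
  then have "((\<lambda>x. integral {-2..x} (envelope_density e)) has_real_derivative envelope_density e c)
      (at c)"
    using assms at_within_interior[of c "{-2..2::real}"] by simp
  then show ?thesis unfolding envelope_tail_def by (auto intro!: derivative_eq_intros)
qed

lemma envelope_tail_eq_0:
  assumes "0 < e" "e < 1" "sqrt (1 - e\<^sup>2) \<le> c" "c \<le> 1"
  shows "envelope_tail e c = 0"
proof -
  have "-2 \<le> c" using assms(3) real_sqrt_ge_zero[of "1 - e\<^sup>2"] assms(1,2)
    by (smt (verit) power_le_one)
  moreover have "integral {c..1} (envelope_density e) = integral {c..1} (\<lambda>_. 0)"
    using assms by (intro integral_cong envelope_density_eq_0) auto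
  ultimately show ?thesis using envelope_tail_eq[OF assms(1) _ assms(4)] by simp
qed

lemma envelope_tail_bounds:
  assumes "0 < e" "-1 \<le> c" "c \<le> 1"
  shows "0 \<le> envelope_tail e c" "envelope_tail e c \<le> (1 - c) / (2 * e)"
proof -
  have eq: "envelope_tail e c = integral {c..1} (envelope_density e) / 4"
    using assms by (intro envelope_tail_eq) auto
  show "0 \<le> envelope_tail e c" unfolding eq
    using assms
      by (auto intro!: integral_nonneg envelope_density_integrable envelope_density_nonneg)
  have "integral {c..1} (envelope_density e) \<le> integral {c..1} (\<lambda>_. 2 / e)"
    using assms by (intro integral_le envelope_density_integrable envelope_density_le) auto
  then show "envelope_tail e c \<le> (1 - c) / (2 * e)"
    unfolding eq using assms by (simp add: field_simps)
qed

lemma envelope_tail_cos_deriv: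
  assumes "0 < e"
  shows "((\<lambda>t. envelope_tail e (cos (2 * t))) has_real_derivative wave e t * (sin t)\<^sup>2) (at t)"
proof -
  have c: "-2 < cos (2 * t)" "cos (2 * t) < 2"
    using cos_ge_minus_one[of "2 * t"] cos_le_one[of "2 * t"] by linarith+
  have d: "((\<lambda>t. cos (2 * t)) has_real_derivative - sin (2 * t) * 2) (at t)"
    by (auto intro!: derivative_eq_intros)
  have "((\<lambda>t. envelope_tail e (cos (2 * t))) has_real_derivative
      - envelope_density e (cos (2 * t)) / 4 * (- sin (2 * t) * 2)) (at t)"
    using DERIV_chain2[OF envelope_tail_deriv[OF assms c] d] by simp
  moreover have "- envelope_density e (cos (2 * t)) / 4 * (- sin (2 * t) * 2)
      = wave e t * (sin t)\<^sup>2"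
    unfolding envelope_density_cos wave_def by (simp add: field_simps)
  ultimately show ?thesis by simp
qed

lemma envelope_eventually_0:
  assumes "0 < e" "e < 1" "sin t = 0"
  shows "\<forall>\<^sub>F x in nhds t. envelope e x = 0"
proof -
  define \<delta> where "\<delta> = (1 - sqrt (1 - e\<^sup>2)) / 2"
  have "sqrt (1 - e\<^sup>2) < 1" using assms by (simp add: real_sqrt_less_iff[of _ 1, simplified])
  then have "0 < \<delta>" by (simp add: \<delta>_def)
  moreover have "isCont (\<lambda>x. (sin x)\<^sup>2) t" by (intro continuous_intros)
  then have "((\<lambda>x. (sin x)\<^sup>2) \<longlongrightarrow> 0) (nhds t)"
    using assms(3) by (metis (no_types, lifting) tendsto_nhds_iff zero_power2 isCont_def)
  ultimately have "\<forall>\<^sub>F x in nhds t. (sin x)\<^sup>2 < \<delta>" using order_tendstoD(2) by blast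
  then show ?thesis
  proof eventually_elim
    case (elim x)
    have "cos (2 * x) = 1 - 2 * (sin x)\<^sup>2" by (simp add: cos_double_sin)
    then have "sqrt (1 - e\<^sup>2) \<le> cos (2 * x)" using elim by (simp add: \<delta>_def)
    then show ?case using envelope_tail_eq_0[OF assms(1,2)] by (simp add: envelope_def)
  qed
qed

lemma envelope_deriv_identity:
  "envelope_deriv e t * sin t + 2 * envelope e t * cos t = wave e t * sin t"
  by (cases "sin t = 0") (simp_all add: envelope_deriv_def envelope_def field_simps)

lemma envelope_has_deriv:
  assumes "0 < e" "e < 1"
  shows "(envelope e has_real_derivative envelope_deriv e t) (at t)"
proof (cases "sin t = 0")
  case True
  have "envelope_deriv e t = 0"
    using True by (simp add: envelope_deriv_def wave_def sin_double)
  moreover have "((\<lambda>_. 0) has_real_derivative 0) (at t)" by simp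
  ultimately show ?thesis
    using envelope_eventually_0[OF assms True] by (simp add: DERIV_cong_ev)
next
  case False
  have "((\<lambda>t. envelope_tail e (cos (2 * t)) / (sin t)\<^sup>2) has_real_derivative
      (wave e t * (sin t)\<^sup>2 * (sin t)\<^sup>2 - envelope_tail e (cos (2 * t)) * (2 * sin t * cos t))
        / ((sin t)\<^sup>2 * (sin t)\<^sup>2)) (at t)"
    using False by (intro DERIV_divide envelope_tail_cos_deriv[OF assms(1)])
      (auto intro!: derivative_eq_intros)
  moreover have "(wave e t * (sin t)\<^sup>2 * (sin t)\<^sup>2
      - envelope_tail e (cos (2 * t)) * (2 * sin t * cos t))
      / ((sin t)\<^sup>2 * (sin t)\<^sup>2) = envelope_deriv e t"
    using False by (simp add: envelope_def envelope_deriv_def field_simps power2_eq_square)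
  ultimately show ?thesis by (simp add: envelope_def[abs_def])
qed

lemma envelope_bounds:
  assumes "0 < e" shows "0 \<le> envelope e t" "envelope e t \<le> 1 / e"
proof -
  have c: "-1 \<le> cos (2 * t)" "cos (2 * t) \<le> 1" by auto
  show "0 \<le> envelope e t"
    using envelope_tail_bounds(1)[OF assms c] by (simp add: envelope_def)
  have "envelope_tail e (cos (2 * t)) \<le> (sin t)\<^sup>2 / e"
    using envelope_tail_bounds(2)[OF assms c] by (simp add: cos_double_sin)
  then show "envelope e t \<le> 1 / e"
    using assms by (cases "sin t = 0") (simp_all add: envelope_def field_simps)
qed

definition envelope_primitive :: "real \<Rightarrow> real \<Rightarrow> real" where
  "envelope_primitive e t = integral {0..t} (rectified_sin e) / 2 - envelope e t * sin t * cos t"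

definition envelope_slope :: "real \<Rightarrow> real" where
  "envelope_slope e = integral {0..pi} (rectified_sin e) / (2 * pi)"

lemma continuous_on_rectified_sin: "continuous_on UNIV (rectified_sin e)"
  unfolding rectified_sin_def by (intro continuous_intros)

lemma rectified_sin_periodic: "rectified_sin e (t + pi) = rectified_sin e t"
  by (simp add: rectified_sin_def distrib_left)

lemma envelope_primitive_deriv:
  assumes "0 < e" "e < 1" "0 < t"
  shows "(envelope_primitive e has_real_derivative envelope e t) (at t)"
proof -
  have "((\<lambda>x. integral {0..x} (rectified_sin e)) has_real_derivative rectified_sin e t)
      (at t within {0..t + 1})"
    using assms
    by (intro integral_has_real_derivative continuous_on_subset[OF continuous_on_rectified_sin]) auto
  then have I: "((\<lambda>x. integral {0..x} (rectified_sin e)) has_real_derivative rectified_sin e t)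
      (at t)"
    using assms at_within_interior[of t "{0..t + 1}"] by simp
  have "(envelope_primitive e has_real_derivative
      rectified_sin e t / 2 - (envelope_deriv e t * sin t * cos t + envelope e t * cos t * cos t
        - envelope e t * sin t * sin t)) (at t)"
    unfolding envelope_primitive_def[abs_def]
    by (auto intro!: derivative_eq_intros I envelope_has_deriv[OF assms(1,2)] simp: algebra_simps)
  moreover have "rectified_sin e t
      = 2 * (envelope_deriv e t * sin t + 2 * envelope e t * cos t) * cos t"
    using wave_mult_sin[OF assms(1), of t] envelope_deriv_identity[of e t] by (simp add: sin_double)
  then have "rectified_sin e t / 2
      - (envelope_deriv e t * sin t * cos t + envelope e t * cos t * cos t
        - envelope e t * sin t * sin t) = envelope e t"
    using sin_cos_squared_add[of t] by algebra
  ultimately show ?thesis by simp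
qed

lemma envelope_primitive_deviation_bounded:
  assumes "0 < e"
  shows "\<exists>C. \<forall>t\<ge>0. \<bar>envelope_primitive e t - envelope_slope e * t\<bar> \<le> C"
proof -
  obtain B where B: "\<And>t. 0 \<le> t \<Longrightarrow>
      \<bar>integral {0..t} (rectified_sin e) - integral {0..pi} (rectified_sin e) / pi * t\<bar> \<le> B"
    using integral_periodic_deviation_bounded[of pi "rectified_sin e"]
      continuous_on_rectified_sin rectified_sin_periodic by auto
  have "\<bar>envelope_primitive e t - envelope_slope e * t\<bar> \<le> B / 2 + 1 / e" if "0 \<le> t" for t
  proof -
    have "\<bar>sin t * cos t\<bar> \<le> 1"
      using abs_sin_le_one[of t] abs_cos_le_one[of t] by (simp add: abs_mult mult_le_one)
    then have "\<bar>envelope e t * (sin t * cos t)\<bar> \<le> 1 / e * 1"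
      unfolding abs_mult using assms envelope_bounds[OF assms, of t] by (intro mult_mono) auto
    moreover have "envelope_primitive e t - envelope_slope e * t
        = (integral {0..t} (rectified_sin e) - integral {0..pi} (rectified_sin e) / pi * t) / 2
          - envelope e t * (sin t * cos t)"
      by (simp add: envelope_primitive_def envelope_slope_def field_simps)
    moreover have "\<bar>X / 2 - Y\<bar> \<le> B / 2 + c" if "\<bar>X\<bar> \<le> B" "\<bar>Y\<bar> \<le> c" for X Y c :: real
      using that by (simp add: abs_le_iff field_simps)
    ultimately show ?thesis using B[OF \<open>0 \<le> t\<close>] by simp
  qed
  then show ?thesis by blast
qed

lemma has_integral_abs_sin_double: "((\<lambda>t. \<bar>sin (2 * t)\<bar>) has_integral 2) {0..pi}"
proof -
  have "((\<lambda>t. \<bar>sin (2 * t)\<bar>) has_integral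
      (- cos (2 * (pi / 2)) / 2 - - cos (2 * 0) / 2)) {0..pi / 2}"
  proof (rule fundamental_theorem_of_calculus)
    fix x assume "x \<in> {0..pi / 2}"
    then have "0 \<le> sin (2 * x)" by (intro sin_ge_zero) auto
    then show "((\<lambda>t. - cos (2 * t) / 2) has_vector_derivative \<bar>sin (2 * x)\<bar>)
        (at x within {0..pi / 2})"
      by (auto intro!: derivative_eq_intros simp flip:
          has_real_derivative_iff_has_vector_derivative)
  qed simp
  moreover have "((\<lambda>t. \<bar>sin (2 * t)\<bar>) has_integral
      (cos (2 * pi) / 2 - cos (2 * (pi / 2)) / 2)) {pi / 2..pi}"
  proof (rule fundamental_theorem_of_calculus)
    fix x assume "x \<in> {pi / 2..pi}"
    then have "0 \<le> sin (2 * x - pi)" by (intro sin_ge_zero) auto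
    then have "sin (2 * x) \<le> 0" by (simp add: sin_diff)
    then show "((\<lambda>t. cos (2 * t) / 2) has_vector_derivative \<bar>sin (2 * x)\<bar>)
        (at x within {pi / 2..pi})"
      by (auto intro!: derivative_eq_intros simp flip:
          has_real_derivative_iff_has_vector_derivative)
  qed simp
  ultimately have "((\<lambda>t. \<bar>sin (2 * t)\<bar>) has_integral (1 + 1)) {0..pi}"
    by (intro has_integral_combine[of 0 "pi / 2" pi]) auto
  then show ?thesis by simp
qed

lemma envelope_slope_ge: assumes "0 < e" shows "1 / pi - e / 2 \<le> envelope_slope e"
proof -
  have "((\<lambda>t. \<bar>sin (2 * t)\<bar> - e) has_integral (2 - pi * e)) {0..pi}"
    using has_integral_diff[OF has_integral_abs_sin_double has_integral_const_real[of e 0 pi]]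
    by (simp add: mult.commute)
  moreover have "integral {0..pi} (\<lambda>t. \<bar>sin (2 * t)\<bar> - e) \<le> integral {0..pi} (rectified_sin e)"
    by (intro integral_le integrable_continuous_interval continuous_intros
        continuous_on_subset[OF continuous_on_rectified_sin]) (auto simp: rectified_sin_def)
  ultimately have "2 - pi * e \<le> integral {0..pi} (rectified_sin e)"
    by (simp add: integral_unique)
  then have "(2 - pi * e) / (2 * pi) \<le> envelope_slope e"
    unfolding envelope_slope_def by (intro divide_right_mono) auto
  moreover have "(2 - pi * e) / (2 * pi) = 1 / pi - e / 2" by (simp add: field_simps)
  ultimately show ?thesis by simp
qed

lemma wvn_profile_envelope:
  assumes "0 < e" "e < 1" "0 < envelope_slope e"
  obtains C where "wvn_profile (envelope_primitive e) (envelope e) (envelope_deriv e) (wave e)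
    (envelope_slope e) C (1 / e) (1 - e)"
proof -
  obtain C where "\<forall>t\<ge>0. \<bar>envelope_primitive e t - envelope_slope e * t\<bar> \<le> C"
    using envelope_primitive_deviation_bounded[OF assms(1)] by blast
  moreover have "\<bar>envelope e t\<bar> \<le> 1 / e" for t
    using envelope_bounds[OF assms(1), of t] by simp
  ultimately show ?thesis
    using assms envelope_primitive_deriv envelope_has_deriv envelope_deriv_identity isCont_wave
      abs_wave_le wave_peaks_unbounded
    by (intro that[of C] wvn_profile.intro) auto
qed

lemma envelope_potential_exists:
  assumes "0 < e" "e < 1" "0 < a" "0 < k" "k / (2 * a) < envelope_slope e"
  shows "\<exists>V. continuous_on {0..} V \<and> Limsup at_top (\<lambda>x. ereal \<bar>x * V x\<bar>) = ereal a
    \<and> half_line_eigenvalue V 0 (k\<^sup>2)"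
proof -
  define m where "m = envelope_slope e"
  define A where "A = a * m / (k * (1 - e))"
  have "0 < k / (2 * a)" using assms by simp
  then have "0 < m" "k < 2 * a * m" using assms(3,5) unfolding m_def
    by (linarith, simp add: field_simps)
  moreover have "k * (1 - e) \<le> k" "0 < k * (1 - e)" using assms by simp_all
  ultimately have m: "0 < m" "1 / 2 < A" by (simp_all add: A_def field_simps)
  obtain C where
    "wvn_profile (envelope_primitive e) (envelope e) (envelope_deriv e) (wave e) m C (1 / e) (1 - e)"
    using wvn_profile_envelope[OF assms(1,2)] m by (auto simp: m_def)
  from wvn_profile.exists_potential[OF this assms(4) m(2)]
  obtain V where "continuous_on {0..} V" "half_line_eigenvalue V 0 (k\<^sup>2)"
    "Limsup at_top (\<lambda>x. ereal \<bar>x * V x\<bar>) = ereal (k * A * (1 - e) / m)"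
    by blast
  moreover have "k * A * (1 - e) / m = a" using assms m by (simp add: A_def field_simps)
  ultimately show ?thesis by auto
qed

theorem theorem1p2:
  fixes a E :: real
  assumes "a > 0" and "0 < E" and "E < 4 * a\<^sup>2 / pi\<^sup>2"
  shows "\<exists>V :: real \<Rightarrow> real. continuous_on {0..} V \<and>
           Limsup at_top (\<lambda>x. ereal \<bar>x * V x\<bar>) = ereal a \<and>
           (\<exists>theta. half_line_eigenvalue V theta E)"
proof -
  define k where "k = sqrt E"
  define e where "e = 1 / pi - k / (2 * a)"
  have k: "0 < k" "k\<^sup>2 = E" using assms(2) by (simp_all add: k_def)
  have "sqrt E < sqrt ((2 * a / pi)\<^sup>2)"
    using assms(3) by (intro real_sqrt_less_mono) (simp add: power_divide power_mult_distrib)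
  then have "k < 2 * a / pi" using assms(1) by (simp add: k_def)
  then have "k / (2 * a) < 1 / pi" using assms(1) by (simp add: field_simps)
  moreover have "0 < k / (2 * a)" "1 / pi < 1" using k assms(1) pi_gt3 by simp_all
  ultimately have e: "0 < e" "e < 1" unfolding e_def by linarith+
  have "k / (2 * a) < envelope_slope e"
    using envelope_slope_ge[OF e(1)] \<open>k / (2 * a) < 1 / pi\<close> e_def by linarith
  then show ?thesis using envelope_potential_exists[OF e assms(1) k(1)] k(2) by blast
qed

end
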